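(* Let $\mathcal{B}=(T,\bowtie)$ be a block of homogeneous transactions, let $k$ be the chromatic number of the conflict graph $(T,\bowtie)$, let $c_{\min}:T\to\{1,\dots,k\}$ be a proper vertex coloring with $k$ colors, $T_i=\{tx: c_{\min}(tx)=i\}$, and $\mathcal S_{c_{\min}}=\mathrm{LevelSchedule}(T_1,\dots,T_k)$. Then $\mathrm{Lt}_{\mathbb 1}(\mathcal S_{c_{\min}})=\mathrm{MinLt}_{\mathbb 1}(\mathcal{B})$, i.e., $\mathcal S_{c_{\min}}$ has minimum latency among all valid schedules of $\mathcal{B}$.
   Context: A block consists of a finite set $T$ of transactions with a symmetric irreflexive conflict relation $\bowtie$; the conflict graph is $(T,\bowtie)$. Homogeneous: all transaction lengths are taken to be $1$. A schedule is a set $\mathcal S\subseteq T\times T$ with $(T,\mathcal S)$ acyclic; it is valid if for every pair $tx\bowtie tx'$ there is a directed path in $(T,\mathcal S)$ from $tx$ to $tx'$ or from $tx'$ to $tx$. $\mathrm{Lt}_{\mathbb 1}(\mathcal S)$ is the maximum number of vertices on a directed path in $(T,\mathcal S)$, and $\mathrm{MinLt}_{\mathbb 1}(\mathcal{B})$ is the minimum of $\mathrm{Lt}_{\mathbb 1}(\mathcal S)$ over all valid schedules $\mathcal S$. $\mathrm{LevelSchedule}(B_1,\dots,B_k)$ for an ordered partition of $T$ into conflict-free sets: set $B_0=\emptyset$, $\mathcal S=\emptyset$; for $i=1,\dots,k$ and, for each $i$, for $j=i-1,\dots,0$ (decreasing): let $E=\{(u,v)\in B_j\times B_i: u\bowtie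 v\}$, let $P$ be the set of pairs $(x,y)$ with a directed path from $x$ to $y$ in the current $(T,\mathcal S)$, and set $\mathcal S\leftarrow\mathcal S\cup(E\setminus P)$; output $\mathcal S$. *)

theory Defs
  imports Main
begin

text \<open>A block: a finite set T of transactions with a symmetric irreflexive
conflict relation conf (the conflict graph is (T, conf)).
Schedules are edge sets S \<subseteq> T \<times> T with (T,S) acyclic.\<close>

definition is_schedule :: "'a set \<Rightarrow> ('a \<times> 'a) set \<Rightarrow> bool" where
  "is_schedule T S \<longleftrightarrow> S \<subseteq> T \<times> T \<and> acyclic S"

definition valid_schedule :: "'a set \<Rightarrow> ('a \<Rightarrow> 'a \<Rightarrow> bool) \<Rightarrow> ('a \<times> 'a) set \<Rightarrow> bool" where
  "valid_schedule T conf S \<longleftrightarrow> is_schedule T S \<and>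
     (\<forall>x\<in>T. \<forall>y\<in>T. conf x y \<longrightarrow> (x, y) \<in> S\<^sup>+ \<or> (y, x) \<in> S\<^sup>+)"

definition is_dpath :: "'a set \<Rightarrow> ('a \<times> 'a) set \<Rightarrow> 'a list \<Rightarrow> bool" where
  "is_dpath T S p \<longleftrightarrow> p \<noteq> [] \<and> set p \<subseteq> T \<and>
     (\<forall>i. Suc i < length p \<longrightarrow> (p ! i, p ! Suc i) \<in> S)"

definition Lt1 :: "'a set \<Rightarrow> ('a \<times> 'a) set \<Rightarrow> nat" where
  "Lt1 T S = Max (insert 0 {length p | p. is_dpath T S p})"

definition MinLt1 :: "'a set \<Rightarrow> ('a \<Rightarrow> 'a \<Rightarrow> bool) \<Rightarrow> nat" where
  "MinLt1 T conf = Min {Lt1 T S | S. valid_schedule T conf S}"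

definition proper_coloring :: "'a set \<Rightarrow> ('a \<Rightarrow> 'a \<Rightarrow> bool) \<Rightarrow> nat \<Rightarrow> ('a \<Rightarrow> nat) \<Rightarrow> bool" where
  "proper_coloring T conf k c \<longleftrightarrow> (\<forall>x\<in>T. c x \<in> {1..k}) \<and>
     (\<forall>x\<in>T. \<forall>y\<in>T. conf x y \<longrightarrow> c x \<noteq> c y)"

definition chromatic_number :: "'a set \<Rightarrow> ('a \<Rightarrow> 'a \<Rightarrow> bool) \<Rightarrow> nat" where
  "chromatic_number T conf = (LEAST k. \<exists>c. proper_coloring T conf k c)"

text \<open>LevelSchedule(B_1,...,B_k): Bs = [B_1,...,B_k], B_0 = {}.\<close>
definition level_B :: "'a set list \<Rightarrow> nat \<Rightarrow> 'a set" where
  "level_B Bs j = (if j = 0 then {} else Bs ! (j - 1))"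

definition level_step :: "('a \<Rightarrow> 'a \<Rightarrow> bool) \<Rightarrow> 'a set \<Rightarrow> 'a set \<Rightarrow> ('a \<times> 'a) set \<Rightarrow> ('a \<times> 'a) set" where
  "level_step conf Bj Bi S = S \<union> ({(u, v). u \<in> Bj \<and> v \<in> Bi \<and> conf u v} - S\<^sup>+)"

definition level_inner :: "('a \<Rightarrow> 'a \<Rightarrow> bool) \<Rightarrow> 'a set list \<Rightarrow> nat \<Rightarrow> ('a \<times> 'a) set \<Rightarrow> ('a \<times> 'a) set" where
  "level_inner conf Bs i S =
     fold (\<lambda>j S. level_step conf (level_B Bs j) (level_B Bs i) S) (rev [0..<i]) S"

definition level_schedule :: "('a \<Rightarrow> 'a \<Rightarrow> bool) \<Rightarrow> 'a set list \<Rightarrow> ('a \<times> 'a) set" where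
  "level_schedule conf Bs = fold (\<lambda>i S. level_inner conf Bs i S) [1..<Suc (length Bs)] {}"

end

theory Submission
  imports Defs
begin

text \<open>Lower bound: in any valid schedule, colouring each transaction by the number of vertices
of a longest path ending in it is a proper colouring with at most as many colours as the
latency, since the depth strictly increases along edges and conflicting transactions are
joined by a path. Upper bound: every edge that LevelSchedule adds on the colour classes of a
proper \<open>k\<close>-colouring leads from a lower to a higher colour class, so every path has at most
\<open>k\<close> vertices; and it orders any two conflicting transactions of different colours, because the
step for the pair of their classes adds the edge unless a path between them already exists.
For \<open>k\<close> the chromatic number the two bounds meet.\<close>

lemma trancl_less_of_edges_less:
  fixes f :: "'a \<Rightarrow> 'b::order"
  assumes "\<And>u v. (u, v) \<in> S \<Longrightarrow> f u < f v" and "(x, y) \<in> S\<^sup>+"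
  shows "f x < f y"
  using assms(2)
proof induction
  case (base y)
  then show ?case by (rule assms(1))
next
  case (step y z)
  show ?case using step.IH assms(1)[OF step.hyps(2)] by (rule less_trans)
qed

lemma acyclic_of_edges_less:
  fixes f :: "'a \<Rightarrow> 'b::order"
  assumes "\<And>u v. (u, v) \<in> S \<Longrightarrow> f u < f v"
  shows "acyclic S"
  unfolding acyclic_def using trancl_less_of_edges_less[of S f, OF assms] by (metis less_irrefl)

lemma fold_inflationary:
  assumes "\<And>x S. x \<in> set xs \<Longrightarrow> S \<subseteq> f x S"
  shows "S \<subseteq> fold f xs S"
proof (rule fold_invariant[where Q = "\<lambda>x. x \<in> set xs" and P = "\<lambda>S'. S \<subseteq> S'"])
  show "S \<subseteq> f x S'" if "x \<in> set xs" and "S \<subseteq> S'" for x S'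
    using assms[OF that(1), of S'] that(2) by blast
qed simp_all

lemma fold_inflationary_step_subset:
  assumes "\<And>x S. x \<in> set xs \<Longrightarrow> S \<subseteq> f x S" and "a \<in> set xs"
  shows "\<exists>S'. f a S' \<subseteq> fold f xs S"
  using assms
proof (induction xs arbitrary: S)
  case Nil
  then show ?case by simp
next
  case (Cons y ys)
  show ?case
  proof (cases "a \<in> set ys")
    case True
    then show ?thesis using Cons.IH Cons.prems(1) by simp
  next
    case False
    then have "a = y" using Cons.prems(2) by simp
    moreover have "f y S \<subseteq> fold f ys (f y S)"
      by (rule fold_inflationary) (use Cons.prems(1) in simp)
    ultimately show ?thesis by (intro exI[of _ S]) simp
  qed
qed

lemma is_dpath_singleton: "x \<in> T \<Longrightarrow> is_dpath T S [x]"
  unfolding is_dpath_def by simp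

lemma is_dpath_snoc:
  assumes "is_dpath T S p" and "(last p, y) \<in> S" and "y \<in> T"
  shows "is_dpath T S (p @ [y])"
  unfolding is_dpath_def
proof (intro conjI allI impI)
  fix i assume i: "Suc i < length (p @ [y])"
  show "((p @ [y]) ! i, (p @ [y]) ! Suc i) \<in> S"
  proof (cases "Suc i < length p")
    case True
    then show ?thesis using assms(1) by (simp add: is_dpath_def nth_append)
  next
    case False
    with i have "i = length p - 1" "p \<noteq> []" by auto
    then show ?thesis using assms(2) by (simp add: nth_append last_conv_nth)
  qed
qed (use assms in \<open>auto simp: is_dpath_def\<close>)

lemma is_dpath_trancl:
  assumes "is_dpath T S p" and "i < j" and "j < length p"
  shows "(p ! i, p ! j) \<in> S\<^sup>+"
  using assms(2,3)
proof (induction j)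
  case 0
  then show ?case by simp
next
  case (Suc j)
  have "(p ! j, p ! Suc j) \<in> S" using assms(1) Suc.prems(2) unfolding is_dpath_def by blast
  moreover have "i = j \<or> (p ! i, p ! j) \<in> S\<^sup>+" using Suc by (auto simp: less_Suc_eq)
  ultimately show ?case by auto
qed

lemma is_dpath_distinct:
  assumes "acyclic S" and "is_dpath T S p"
  shows "distinct p"
  unfolding distinct_conv_nth
proof (intro allI impI)
  fix i j assume "i < length p" "j < length p" "i \<noteq> j"
  then have "(p ! min i j, p ! max i j) \<in> S\<^sup>+"
    by (intro is_dpath_trancl[OF assms(2)]) auto
  then have "p ! min i j \<noteq> p ! max i j" using assms(1) unfolding acyclic_def by metis
  then show "p ! i \<noteq> p ! j" by (metis max_def min_def)
qed

lemma is_dpath_length_le_card: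
  assumes "finite T" and "acyclic S" and "is_dpath T S p"
  shows "length p \<le> card T"
proof -
  have "length p = card (set p)" using is_dpath_distinct[OF assms(2,3)] by (simp add: distinct_card)
  also have "\<dots> \<le> card T" using assms(1,3) unfolding is_dpath_def by (simp add: card_mono)
  finally show ?thesis .
qed

lemma finite_dpath_lengths:
  assumes "finite T" and "acyclic S"
  shows "finite {length p | p. P p \<and> is_dpath T S p}"
  by (rule finite_subset[of _ "{..card T}"]) (auto dest: is_dpath_length_le_card[OF assms])

lemma Lt1_ge:
  assumes "finite T" and "acyclic S" and "is_dpath T S p"
  shows "length p \<le> Lt1 T S"
  using finite_dpath_lengths[OF assms(1,2), of "\<lambda>_. True"] assms(3)
  unfolding Lt1_def by (intro Max_ge) auto

lemma Lt1_le:
  assumes "\<And>p. is_dpath T S p \<Longrightarrow> length p \<le> n"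
  shows "Lt1 T S \<le> n"
proof -
  have "finite {length p | p. is_dpath T S p}"
    by (rule finite_subset[of _ "{..n}"]) (auto dest: assms)
  then show ?thesis unfolding Lt1_def using assms by (auto simp: Max_le_iff)
qed

lemma Lt1_le_of_edges_less:
  assumes edges: "\<And>u v. (u, v) \<in> S \<Longrightarrow> c u < c v"
    and bounded: "\<forall>x\<in>T. c x \<in> {1..k}"
  shows "Lt1 T S \<le> k"
proof (rule Lt1_le)
  fix p assume p: "is_dpath T S p"
  then have in_T: "i < length p \<Longrightarrow> p ! i \<in> T" for i
    unfolding is_dpath_def by (meson nth_mem subsetD)
  have colour_ge: "Suc i \<le> c (p ! i)" if "i < length p" for i
    using that
  proof (induction i)
    case 0
    then show ?case using in_T bounded by fastforce
  next
    case (Suc i)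
    then have "(p ! i, p ! Suc i) \<in> S" using p unfolding is_dpath_def by blast
    then show ?case using Suc edges by fastforce
  qed
  have "p \<noteq> []" using p unfolding is_dpath_def by simp
  then have "Suc (length p - 1) \<le> c (p ! (length p - 1))" and "c (p ! (length p - 1)) \<le> k"
    using colour_ge[of "length p - 1"] in_T[of "length p - 1"] bounded by auto
  then show "length p \<le> k" by simp
qed

lemma MinLt1_eqI:
  assumes "finite T" and valid: "valid_schedule T conf S"
    and minimal: "\<And>S'. valid_schedule T conf S' \<Longrightarrow> Lt1 T S \<le> Lt1 T S'"
  shows "MinLt1 T conf = Lt1 T S"
  unfolding MinLt1_def
proof (rule Min_eqI)
  have "{Lt1 T S' | S'. valid_schedule T conf S'} \<subseteq> Lt1 T ` Pow (T \<times> T)"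
    unfolding valid_schedule_def is_schedule_def by auto
  then show "finite {Lt1 T S' | S'. valid_schedule T conf S'}"
    using assms(1) by (meson finite_SigmaI finite_Pow_iff finite_imageI finite_subset)
qed (use valid minimal in auto)

subsection \<open>The depth colouring of a schedule\<close>

definition depth :: "'a set \<Rightarrow> ('a \<times> 'a) set \<Rightarrow> 'a \<Rightarrow> nat" where
  "depth T S x = Max {length p | p. last p = x \<and> is_dpath T S p}"

context
  fixes T :: "'a set" and S :: "('a \<times> 'a) set"
  assumes finite_T: "finite T" and acyclic_S: "acyclic S"
begin

lemma depth_ge: "is_dpath T S p \<Longrightarrow> length p \<le> depth T S (last p)"
  unfolding depth_def by (rule Max_ge[OF finite_dpath_lengths[OF finite_T acyclic_S]]) blast

lemma depth_attained:
  assumes "x \<in> T"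
  obtains p where "is_dpath T S p" "last p = x" "length p = depth T S x"
proof -
  have "depth T S x \<in> {length p | p. last p = x \<and> is_dpath T S p}"
    unfolding depth_def using is_dpath_singleton[OF assms]
    by (intro Max_in[OF finite_dpath_lengths[OF finite_T acyclic_S]]) force
  then obtain p where "length p = depth T S x" "last p = x" "is_dpath T S p" by auto
  then show ?thesis using that by simp
qed

lemma depth_range:
  assumes "x \<in> T"
  shows "depth T S x \<in> {1..Lt1 T S}"
proof -
  obtain p where "is_dpath T S p" "length p = depth T S x"
    using assms by (rule depth_attained)
  then have "depth T S x \<le> Lt1 T S" using Lt1_ge[OF finite_T acyclic_S] by metis
  moreover have "1 \<le> depth T S x" using depth_ge[OF is_dpath_singleton[OF assms]] by simp
  ultimately show ?thesis by simp
qed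

lemma depth_less:
  assumes "S \<subseteq> T \<times> T" and "(x, y) \<in> S"
  shows "depth T S x < depth T S y"
proof -
  obtain p where p: "is_dpath T S p" "last p = x" "length p = depth T S x"
    using assms by (auto elim: depth_attained)
  have "is_dpath T S (p @ [y])" using p assms by (intro is_dpath_snoc) auto
  from depth_ge[OF this] p show ?thesis by simp
qed

end

lemma proper_coloring_depth:
  assumes "finite T" and valid: "valid_schedule T conf S"
  shows "proper_coloring T conf (Lt1 T S) (depth T S)"
  unfolding proper_coloring_def
proof (intro conjI ballI impI)
  have S: "S \<subseteq> T \<times> T" "acyclic S"
    using valid unfolding valid_schedule_def is_schedule_def by auto
  show "depth T S x \<in> {1..Lt1 T S}" if "x \<in> T" for x
    using depth_range[OF assms(1) S(2) that] .
  fix x y assume "x \<in> T" "y \<in> T" "conf x y"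
  then have "(x, y) \<in> S\<^sup>+ \<or> (y, x) \<in> S\<^sup>+"
    using valid unfolding valid_schedule_def by blast
  then show "depth T S x \<noteq> depth T S y"
    using trancl_less_of_edges_less[OF depth_less[OF assms(1) S(2) S(1)]] by fastforce
qed

lemma chromatic_number_le: "proper_coloring T conf k c \<Longrightarrow> chromatic_number T conf \<le> k"
  unfolding chromatic_number_def by (rule Least_le) blast

lemma chromatic_number_le_Lt1:
  "finite T \<Longrightarrow> valid_schedule T conf S \<Longrightarrow> chromatic_number T conf \<le> Lt1 T S"
  by (rule chromatic_number_le[OF proper_coloring_depth])

lemma level_step_inflationary: "S \<subseteq> level_step conf A B S"
  unfolding level_step_def by blast

lemma level_inner_inflationary: "S \<subseteq> level_inner conf Bs i S"
  unfolding level_inner_def by (rule fold_inflationary) (rule level_step_inflationary)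

lemma level_schedule_edge:
  assumes "(u, v) \<in> level_schedule conf Bs"
  shows "\<exists>j i. j < i \<and> i < length Bs \<and> u \<in> Bs ! j \<and> v \<in> Bs ! i \<and> conf u v"
proof -
  define E where
    "E = {(u, v). \<exists>j i. j < i \<and> i < length Bs \<and> u \<in> Bs ! j \<and> v \<in> Bs ! i \<and> conf u v}"
  have step: "level_step conf (level_B Bs j) (level_B Bs i) S \<subseteq> E"
    if "j < i" "i \<le> length Bs" "S \<subseteq> E" for i j S
  proof -
    have "(u, v) \<in> E" if "u \<in> level_B Bs j" "v \<in> level_B Bs i" "conf u v" for u v
    proof -
      have "j \<noteq> 0" using \<open>u \<in> level_B Bs j\<close> by (simp add: level_B_def split: if_splits)
      then show ?thesis
        using that \<open>j < i\<close> \<open>i \<le> length Bs\<close> unfolding E_def level_B_def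
        by (intro CollectI case_prodI exI[of _ "j - 1"] exI[of _ "i - 1"]) auto
    qed
    then show ?thesis using \<open>S \<subseteq> E\<close> unfolding level_step_def by blast
  qed
  have inner: "level_inner conf Bs i S \<subseteq> E" if "i \<le> length Bs" "S \<subseteq> E" for i S
    unfolding level_inner_def
  proof (rule fold_invariant[where Q = "\<lambda>j. j < i" and P = "\<lambda>S. S \<subseteq> E"])
    show "level_step conf (level_B Bs j) (level_B Bs i) S' \<subseteq> E" if "j < i" "S' \<subseteq> E" for j S'
      using step[OF that(1) \<open>i \<le> length Bs\<close> that(2)] .
  qed (simp_all add: that(2))
  have "level_schedule conf Bs \<subseteq> E"
    unfolding level_schedule_def
  proof (rule fold_invariant[where Q = "\<lambda>i. i \<le> length Bs" and P = "\<lambda>S. S \<subseteq> E"])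
    show "level_inner conf Bs i S \<subseteq> E" if "i \<le> length Bs" "S \<subseteq> E" for i S
      using inner[OF that] .
  qed auto
  then show ?thesis using assms unfolding E_def by blast
qed

lemma level_schedule_orders_conflict:
  assumes "j < i" and "i < length Bs" and "u \<in> Bs ! j" and "v \<in> Bs ! i" and "conf u v"
  shows "(u, v) \<in> (level_schedule conf Bs)\<^sup>+"
proof -
  have in_step: "(u, v) \<in> (level_step conf (level_B Bs (Suc j)) (level_B Bs (Suc i)) S)\<^sup>+" for S
  proof -
    have "(u, v) \<in> S\<^sup>+ \<or> (u, v) \<in> level_step conf (level_B Bs (Suc j)) (level_B Bs (Suc i)) S"
      using assms(3-5) unfolding level_step_def level_B_def by auto
    then show ?thesis using trancl_mono[OF _ level_step_inflationary] by blast
  qed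
  have "(u, v) \<in> (level_inner conf Bs (Suc i) S)\<^sup>+" for S
  proof -
    have "\<exists>S'. level_step conf (level_B Bs (Suc j)) (level_B Bs (Suc i)) S'
        \<subseteq> level_inner conf Bs (Suc i) S"
      unfolding level_inner_def
      by (rule fold_inflationary_step_subset) (use assms(1) in \<open>auto simp: level_step_inflationary\<close>)
    then show ?thesis using in_step trancl_mono by blast
  qed
  moreover have "\<exists>S. level_inner conf Bs (Suc i) S \<subseteq> level_schedule conf Bs"
    unfolding level_schedule_def
    by (rule fold_inflationary_step_subset) (use assms(2) in \<open>auto simp: level_inner_inflationary\<close>)
  ultimately show ?thesis using trancl_mono by blast
qed

subsection \<open>LevelSchedule on the colour classes\<close>

definition colour_classes :: "'a set \<Rightarrow> ('a \<Rightarrow> nat) \<Rightarrow> nat \<Rightarrow> 'a set list" where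
  "colour_classes T c k = map (\<lambda>i. {tx \<in> T. c tx = i}) [1..<Suc k]"

lemma length_colour_classes [simp]: "length (colour_classes T c k) = k"
  unfolding colour_classes_def by simp

lemma nth_colour_classes: "j < k \<Longrightarrow> colour_classes T c k ! j = {tx \<in> T. c tx = Suc j}"
  unfolding colour_classes_def by (simp del: upt_Suc)

lemma level_schedule_colour_classes_edge:
  assumes "(u, v) \<in> level_schedule conf (colour_classes T c k)"
  shows "u \<in> T \<and> v \<in> T \<and> c u < c v"
  using level_schedule_edge[OF assms] by (auto simp: nth_colour_classes)

lemma Lt1_level_schedule_colour_classes_le:
  assumes "proper_coloring T conf k c"
  shows "Lt1 T (level_schedule conf (colour_classes T c k)) \<le> k"
proof (rule Lt1_le_of_edges_less[where c = c])
  show "c u < c v" if "(u, v) \<in> level_schedule conf (colour_classes T c k)" for u v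
    using level_schedule_colour_classes_edge[OF that] by simp
qed (use assms in \<open>simp add: proper_coloring_def\<close>)

lemma valid_schedule_level_schedule_colour_classes:
  assumes sym: "\<forall>x\<in>T. \<forall>y\<in>T. conf x y \<longrightarrow> conf y x"
    and col: "proper_coloring T conf k c"
  shows "valid_schedule T conf (level_schedule conf (colour_classes T c k))"
    (is "valid_schedule T conf ?L")
proof -
  have edges: "u \<in> T \<and> v \<in> T \<and> c u < c v" if "(u, v) \<in> ?L" for u v
    using that by (rule level_schedule_colour_classes_edge)
  then have "acyclic ?L" using acyclic_of_edges_less[of ?L c] by blast
  with edges have "is_schedule T ?L" unfolding is_schedule_def by auto
  moreover have ordered: "(x, y) \<in> ?L\<^sup>+" if "x \<in> T" "y \<in> T" "conf x y" "c x < c y" for x y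
  proof -
    have "c x \<in> {1..k}" "c y \<in> {1..k}" using col that unfolding proper_coloring_def by auto
    then show ?thesis
      using that by (intro level_schedule_orders_conflict[of "c x - 1" "c y - 1"])
        (auto simp: nth_colour_classes)
  qed
  moreover have "(x, y) \<in> ?L\<^sup>+ \<or> (y, x) \<in> ?L\<^sup>+" if "x \<in> T" "y \<in> T" "conf x y" for x y
  proof (cases "c x < c y")
    case True
    then show ?thesis using ordered that by blast
  next
    case False
    moreover have "c x \<noteq> c y" using col that unfolding proper_coloring_def by blast
    ultimately have "c y < c x" by simp
    then show ?thesis using ordered that sym by blast
  qed
  ultimately show ?thesis unfolding valid_schedule_def by blast
qed

theorem theorem4:
  fixes T :: "'a set" and conf :: "'a \<Rightarrow> 'a \<Rightarrow> bool" and c :: "'a \<Rightarrow> nat" and k :: nat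
  assumes fin: "finite T"
    and sym: "\<forall>x\<in>T. \<forall>y\<in>T. conf x y \<longrightarrow> conf y x"
    and irr: "\<forall>x\<in>T. \<not> conf x x"
    and k_def: "k = chromatic_number T conf"
    and col: "proper_coloring T conf k c"
  shows "Lt1 T (level_schedule conf (map (\<lambda>i. {tx \<in> T. c tx = i}) [1..<Suc k]))
           = MinLt1 T conf"
proof -
  let ?L = "level_schedule conf (colour_classes T c k)"
  have "MinLt1 T conf = Lt1 T ?L"
  proof (rule MinLt1_eqI[OF fin valid_schedule_level_schedule_colour_classes[OF sym col]])
    fix S assume "valid_schedule T conf S"
    have "Lt1 T ?L \<le> k" using col by (rule Lt1_level_schedule_colour_classes_le)
    also have "k \<le> Lt1 T S"
      unfolding k_def using fin \<open>valid_schedule T conf S\<close> by (rule chromatic_number_le_Lt1)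
    finally show "Lt1 T ?L \<le> Lt1 T S" .
  qed
  then show ?thesis unfolding colour_classes_def by simp
qed

end
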